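(* Fix $p>1$ and an integer $N\ge0$. Let $Q$ be a standard square with double square $\widetilde Q$, and let $\widetilde\Lambda\subset\mathbb C$ be such that $E^N\colon\widetilde\Lambda\to\widetilde Q$ is a conformal isomorphism with $|(E^N)'|>2$ on $\widetilde\Lambda$. Set $\Lambda:=(E^N)^{-1}(Q)\cap\widetilde\Lambda$ and let $M>0$ with $\Lambda\subset D_M(0)$. Then there is $\xi_*>0$ depending only on $p$ and $M$ such that for all $\xi\ge\xi_*$, $\dim_H(I^N_{p,\xi,\Lambda})\le 1+1/p$.
   Context: For $\kappa\in\mathbb C$ let $E_\kappa(z)=e^z+\kappa$ and $E^n(\kappa):=E_\kappa^{\circ n}(\kappa)$, an entire function of $\kappa$ with derivative $(E^n)'$ with respect to $\kappa$. $I:=\{\kappa\colon E^n(\kappa)\to\infty\}$. $D_r(z)$ is the open disk of radius $r$ about $z$. A standard square is an open square of side length $\pi/2$ with sides parallel to the axes; its double square is the concentric open square with parallel sides of side length $\pi$. For $p>1,\xi\ge0$: $P_{p,\xi}:=\{x+iy\colon x>\xi,\ |y|<x^{1/p}\}$. For an open set $\Lambda$: $I_{p,\Lambda}:=\{\kappa\in\Lambda\cap I\colon |(E^n)'(\kappa)|\to\infty \text{ and } E^n(\kappa)\in P_{p,0} \text{ for all sufficiently large } n\}$, and $I^N_{p,\xi,\Lambda}:=\{\kappa\in I_{p,\Lambda}\colon E^n(\kappa)\in P_{p,\xi}\text{ for all } n\ge N\}$. *)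

theory Defs
  imports "HOL-Analysis.Analysis"
begin

definition Eiter :: "nat \<Rightarrow> complex \<Rightarrow> complex" where
  "Eiter n \<kappa> = ((\<lambda>z. exp z + \<kappa>) ^^ n) \<kappa>"

definition escaping :: "complex set" where
  "escaping = {\<kappa>. filterlim (\<lambda>n. Eiter n \<kappa>) at_infinity sequentially}"

definition open_square :: "complex \<Rightarrow> real \<Rightarrow> complex set" where
  "open_square c r = {z. \<bar>Re z - Re c\<bar> < r \<and> \<bar>Im z - Im c\<bar> < r}"

definition Pset :: "real \<Rightarrow> real \<Rightarrow> complex set" where
  "Pset p \<xi> = {z. Re z > \<xi> \<and> \<bar>Im z\<bar> < Re z powr (1 / p)}"

definition I_p :: "real \<Rightarrow> complex set \<Rightarrow> complex set" where
  "I_p p \<Lambda> = {\<kappa> \<in> \<Lambda> \<inter> escaping.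
      filterlim (\<lambda>n. norm (deriv (Eiter n) \<kappa>)) at_top sequentially \<and>
      (\<forall>\<^sub>F n in sequentially. Eiter n \<kappa> \<in> Pset p 0)}"

definition I_pN :: "real \<Rightarrow> nat \<Rightarrow> real \<Rightarrow> complex set \<Rightarrow> complex set" where
  "I_pN p N \<xi> \<Lambda> = {\<kappa> \<in> I_p p \<Lambda>. \<forall>n\<ge>N. Eiter n \<kappa> \<in> Pset p \<xi>}"

text \<open>Hausdorff measure and dimension (in a metric space), via countable covers by
  bounded sets of diameter at most delta; conventions diam(empty)^s = 0 and
  diam(U)^0 = 1 for nonempty U.\<close>
definition diam_pow :: "real \<Rightarrow> 'a::metric_space set \<Rightarrow> ennreal" where
  "diam_pow s U = (if U = {} then 0 else if s = 0 then 1 else ennreal (diameter U powr s))"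

definition hausdorff_content :: "real \<Rightarrow> real \<Rightarrow> 'a::metric_space set \<Rightarrow> ennreal" where
  "hausdorff_content s \<delta> A = Inf {(\<Sum>i. diam_pow s (U i)) | U :: nat \<Rightarrow> 'a set.
      A \<subseteq> (\<Union>i. U i) \<and> (\<forall>i. bounded (U i) \<and> diameter (U i) \<le> \<delta>)}"

definition hausdorff_measure :: "real \<Rightarrow> 'a::metric_space set \<Rightarrow> ennreal" where
  "hausdorff_measure s A = Sup {hausdorff_content s \<delta> A | \<delta>. \<delta> > 0}"

definition hausdorff_dim :: "'a::metric_space set \<Rightarrow> real" where
  "hausdorff_dim A = Inf {s. s \<ge> 0 \<and> hausdorff_measure s A = 0}"

end

theory Submission
  imports Defs
begin

(* For a threshold xi >= 4M + 20 every parameter of the set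
   I^N_{p,xi,Lambda} is "trapped": its orbit E^(N+j)(kappa) stays in P_{p,xi} for all j.
   Along such orbits the real part grows by at least 1 per step, so the parameter
   iteration expands distances by exp(Re)/8 per step (exp_step_expansion), starting from
   the factor 2 of the conformal map E^N (inverse_branch_expansion).  Recording the grid
   cells of side 1/8 visited by the orbit (the itinerary), parameters with a common
   itinerary of length K+1 lie in a piece of diameter at most the product of the
   inverse expansion factors.  Counting admissible itineraries, a successor of a cell in
   column x can be chosen in O(exp((1 + 1/p) x)) ways since the orbit stays in P_{p,xi};
   for s > 1 + 1/p the total s-weight of the pieces therefore tends to 0.  Hence the
   s-dimensional Hausdorff measure of the trapped set vanishes for every s > 1 + 1/p.
   The file first proves general estimates (exponential, inverse branches, Hausdorff
   dimension), then carries out the covering argument in the locale parameter_square,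
   and finally derives the proposition with xi_* = 4M + 20. *)

lemma Eiter_Suc: "Eiter (Suc n) k = exp (Eiter n k) + k"
  by (simp add: Eiter_def)

lemma Eiter_holomorphic: "Eiter n holomorphic_on UNIV"
proof (induction n)
  case 0
  then show ?case by (simp add: Eiter_def holomorphic_on_ident)
next
  case (Suc n)
  have "Eiter (Suc n) = (\<lambda>k. exp (Eiter n k) + k)"
    by (rule ext) (simp add: Eiter_Suc)
  then show ?case using Suc by (auto intro!: holomorphic_intros)
qed

lemma norm_exp_minus_one_ge:
  fixes d :: complex
  assumes "norm d \<le> 1/4"
  shows "norm d / 4 \<le> norm (exp d - 1)"
proof -
  have taylor: "norm (exp d - (1 + d)) \<le> exp (norm d) * norm d ^ 2"
    using Taylor_exp_field[of d 1] by (simp add: numeral_2_eq_2 power_Suc)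
  have "exp (norm d) \<le> 1 + 2 * norm d"
    using exp_bound_lemma[of "norm d"] assms by simp
  then have "exp (norm d) \<le> 3/2" using assms by simp
  moreover have "norm d ^ 2 \<le> norm d * (1/4)"
    unfolding power2_eq_square using assms by (intro mult_left_mono) auto
  ultimately have "exp (norm d) * norm d ^ 2 \<le> 3/2 * (norm d * (1/4))"
    by (intro mult_mono) auto
  then have "norm (exp d - (1 + d)) \<le> 3/8 * norm d" using taylor by simp
  moreover have "norm d \<le> norm (exp d - 1) + norm (exp d - (1 + d))"
    using norm_triangle_ineq4[of "exp d - 1" "exp d - (1 + d)"] by (simp add: algebra_simps)
  ultimately show ?thesis using norm_ge_zero[of d] by linarith
qed

lemma norm_exp_diff_ge:
  fixes u v :: complex
  assumes "norm (u - v) \<le> 1/4"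
  shows "exp (Re v) * norm (u - v) / 4 \<le> norm (exp u - exp v)"
proof -
  have "exp u - exp v = exp v * (exp (u - v) - 1)"
    by (simp add: exp_diff algebra_simps)
  then have "norm (exp u - exp v) = exp (Re v) * norm (exp (u - v) - 1)"
    by (simp add: norm_mult)
  then show ?thesis using norm_exp_minus_one_ge[OF assms] by (simp add: mult_left_mono)
qed

lemma exp_step_expansion:
  fixes u v k k' :: complex
  assumes close: "norm (u - v) \<le> 1/4" and x: "x \<le> Re v" and big: "16 \<le> exp x"
    and params: "norm (k - k') \<le> norm (u - v) / 2"
  shows "exp x * norm (u - v) / 8 \<le> norm ((exp u + k) - (exp v + k'))"
proof -
  define d where "d = norm (u - v)"
  have "exp x * d / 4 \<le> exp (Re v) * d / 4"
    using x by (simp add: d_def divide_right_mono mult_right_mono)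
  also have "\<dots> \<le> norm (exp u - exp v)"
    using norm_exp_diff_ge[OF close] by (simp add: d_def)
  finally have expanded: "exp x * d / 4 \<le> norm (exp u - exp v)" .
  have regroup: "(exp u + k) - (exp v + k') = (exp u - exp v) + (k - k')"
    by simp
  have "16 * d \<le> exp x * d"
    using big by (intro mult_right_mono) (auto simp: d_def)
  moreover have "norm (exp u - exp v) - norm (k - k') \<le> norm ((exp u + k) - (exp v + k'))"
    unfolding regroup by (rule norm_diff_ineq)
  ultimately show ?thesis using expanded params norm_ge_zero[of "u - v"] unfolding d_def by linarith
qed

(* For large x the exponential dominates the linear growth needed to push real parts to the right. *)
lemma exp_ge_linear:
  fixes x M :: real
  assumes M: "M \<ge> 0" and x: "x \<ge> 4 * M + 20"
  shows "2 * x + 2 + M \<le> exp x"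
proof -
  have "(1 + x/2)^2 \<le> exp (x/2) ^ 2"
    using x M by (intro power_mono) (auto intro: exp_ge_add_one_self order_trans)
  also have "\<dots> = exp x"
    by (simp add: power2_eq_square flip: exp_add)
  finally have "(1 + x/2)^2 \<le> exp x" .
  moreover have "(1 + x/2)^2 = 1 + x + x * x / 4"
    by (simp add: power2_eq_square algebra_simps)
  moreover have "x * M + 5 * x \<le> x * x / 4"
    using x M mult_left_mono[of "M + 5" "x/4" x] by (simp add: algebra_simps)
  moreover have "1 * M \<le> x * M"
    using x M by (intro mult_right_mono) auto
  ultimately show ?thesis using x M by linarith
qed

(* Open squares are convex, so inverse branches defined on them obey a mean value bound. *)
lemma convex_open_square: "convex (open_square c r)"
proof -
  have "open_square c r = {z. Re z > Re c - r} \<inter> {z. Re z < Re c + r}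
      \<inter> {z. Im z > Im c - r} \<inter> {z. Im z < Im c + r}"
    by (auto simp: open_square_def abs_less_iff)
  then show ?thesis
    by (simp add: convex_Int convex_halfspace_Re_gt convex_halfspace_Re_lt
        convex_halfspace_Im_gt convex_halfspace_Im_lt)
qed

(* If a holomorphic f maps S bijectively onto a convex set and |f'| > L on S, then f
   expands distances by the factor L (mean value inequality for the inverse branch). *)
lemma inverse_branch_expansion:
  fixes f :: "complex \<Rightarrow> complex"
  assumes holo: "f holomorphic_on S" and S: "open S" and bij: "bij_betw f S T"
    and T: "convex T" and L: "L > 0" and der: "\<And>z. z \<in> S \<Longrightarrow> L < norm (deriv f z)"
    and z: "z \<in> S" and w: "w \<in> S"
  shows "L * norm (z - w) \<le> norm (f z - f w)"
proof -
  define g where "g = inv_into S f"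
  have inj: "inj_on f S" and img: "f ` S = T"
    using bij by (auto simp: bij_betw_def)
  have gf: "\<And>x. x \<in> S \<Longrightarrow> g (f x) = x"
    unfolding g_def using inj by (simp add: inv_into_f_f)
  have cont: "continuous_on S f"
    by (rule holomorphic_on_imp_continuous_on[OF holo])
  have g_deriv: "(g has_field_derivative inverse (deriv f (g y))) (at y within T)"
    and g_deriv_bound: "norm (inverse (deriv f (g y))) \<le> 1 / L" if y: "y \<in> T" for y
  proof -
    have gy: "g y \<in> S" "f (g y) = y"
      using y img unfolding g_def by (auto intro: inv_into_into f_inv_into_f)
    define d where "d = deriv f (g y)"
    have d: "L < norm d" using der gy(1) by (simp add: d_def)
    then have "d \<noteq> 0" using L by auto
    have "(f has_derivative (*) d) (at (g y))"
      using holomorphic_derivI[OF holo S gy(1)] by (simp add: has_field_derivative_def d_def)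
    moreover have "(*) d \<circ> (*) (inverse d) = id"
      using \<open>d \<noteq> 0\<close> by (auto simp: fun_eq_iff)
    ultimately have "(g has_derivative (*) (inverse d)) (at (f (g y)))"
      by (intro has_derivative_inverse_strong[OF S gy(1) cont gf]) auto
    then show "(g has_field_derivative inverse (deriv f (g y))) (at y within T)"
      using gy(2) by (simp add: has_field_derivative_def d_def has_derivative_at_withinI)
    have "inverse (norm d) \<le> inverse L"
      using d L by (intro le_imp_inverse_le) auto
    then show "norm (inverse (deriv f (g y))) \<le> 1 / L"
      by (metis d_def norm_inverse inverse_eq_divide)
  qed
  have "norm (g (f z) - g (f w)) \<le> 1 / L * norm (f z - f w)"
    using z w img by (intro field_differentiable_bound[OF T g_deriv g_deriv_bound]) auto
  then show ?thesis using gf z w L by (simp add: field_simps)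
qed

lemma hausdorff_content_finite_cover:
  fixes A :: "'a::metric_space set" and U :: "'b \<Rightarrow> 'a set"
  assumes F: "finite F" and cover: "A \<subseteq> (\<Union>x\<in>F. U x)" and \<delta>: "\<delta> \<ge> 0"
    and small: "\<And>x. x \<in> F \<Longrightarrow> bounded (U x) \<and> diameter (U x) \<le> \<delta>"
  shows "hausdorff_content s \<delta> A \<le> (\<Sum>x\<in>F. diam_pow s (U x))"
proof -
  obtain h where h: "bij_betw h {0..<card F} F"
    using ex_bij_betw_nat_finite[OF F] by blast
  define V where "V i = (if i < card F then U (h i) else {})" for i
  have "A \<subseteq> (\<Union>i. V i)"
  proof
    fix a assume "a \<in> A"
    then obtain x where x: "x \<in> F" "a \<in> U x" using cover by blast
    then obtain i where "i \<in> {0..<card F}" "h i = x"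
      using h by (metis bij_betw_imp_surj_on imageE)
    then show "a \<in> (\<Union>i. V i)" using x by (auto simp: V_def)
  qed
  moreover have "bounded (V i) \<and> diameter (V i) \<le> \<delta>" for i
  proof (cases "i < card F")
    case True
    then have "h i \<in> F" using h by (auto simp: bij_betw_def)
    then show ?thesis using small True by (simp add: V_def)
  qed (use \<delta> in \<open>simp add: V_def\<close>)
  ultimately have "hausdorff_content s \<delta> A \<le> (\<Sum>i. diam_pow s (V i))"
    unfolding hausdorff_content_def by (intro Inf_lower) blast
  also have "(\<Sum>i. diam_pow s (V i)) = (\<Sum>i\<in>{0..<card F}. diam_pow s (U (h i)))"
    by (subst suminf_finite[of "{0..<card F}"]) (auto simp: V_def diam_pow_def)
  also have "\<dots> = (\<Sum>x\<in>F. diam_pow s (U x))"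
    by (rule sum.reindex_bij_betw[OF h])
  finally show ?thesis .
qed

lemma hausdorff_measure_zeroI:
  assumes "\<And>\<delta>. \<delta> > 0 \<Longrightarrow> hausdorff_content s \<delta> A = 0"
  shows "hausdorff_measure s A = 0"
proof -
  have "{hausdorff_content s \<delta> A | \<delta>. \<delta> > 0} = {0}"
    using assms by (auto intro!: exI[of _ 1])
  then show ?thesis by (simp add: hausdorff_measure_def)
qed

lemma hausdorff_dim_le:
  assumes d: "d \<ge> 0" and null: "\<And>s. s > d \<Longrightarrow> hausdorff_measure s A = 0"
  shows "hausdorff_dim A \<le> d"
proof (rule ccontr)
  define S where "S = {s. s \<ge> 0 \<and> hausdorff_measure s A = 0}"
  assume "\<not> hausdorff_dim A \<le> d"
  then have gt: "d < Inf S" by (simp add: hausdorff_dim_def S_def)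
  define t where "t = (Inf S + d) / 2"
  have t: "d < t" "t < Inf S" using gt by (auto simp: t_def)
  then have "t \<in> S" using null d by (simp add: S_def)
  moreover have "bdd_below S" by (auto simp: S_def bdd_below_def)
  ultimately have "Inf S \<le> t" by (rule cInf_lower)
  then show False using t by simp
qed

lemma tendsto_zero_if_ratio_tendsto_zero:
  fixes w g :: "nat \<Rightarrow> real"
  assumes nonneg: "\<And>n. 0 \<le> w n" and step: "\<And>n. w (Suc n) \<le> g n * w n"
    and g: "g \<longlonglongrightarrow> 0"
  shows "w \<longlonglongrightarrow> 0"
proof -
  obtain J where J: "\<And>n. n \<ge> J \<Longrightarrow> g n < 1/2"
    using order_tendstoD(2)[OF g, of "1/2"] by (auto simp: eventually_sequentially)
  have "norm (w (Suc n)) \<le> 1/2 * norm (w n)" if "n \<ge> J" for n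
  proof -
    have "w (Suc n) \<le> g n * w n" by (rule step)
    also have "\<dots> \<le> 1/2 * w n" using J[OF that] nonneg by (intro mult_right_mono) auto
    finally show ?thesis using nonneg by simp
  qed
  then have "summable w" by (intro summable_ratio_test[of "1/2" J]) auto
  then show ?thesis by (rule summable_LIMSEQ_zero)
qed

lemma norm_le_twice_Re_Pset:
  assumes p: "p \<ge> 1" and \<xi>: "\<xi> \<ge> 1" and w: "w \<in> Pset p \<xi>"
  shows "norm w \<le> 2 * Re w"
proof -
  have w1: "Re w \<ge> 1" using w \<xi> by (simp add: Pset_def)
  then have "Re w powr (1/p) \<le> Re w powr 1"
    using p by (intro powr_mono) auto
  then have "\<bar>Im w\<bar> \<le> Re w" using w w1 by (simp add: Pset_def)
  then show ?thesis using cmod_le[of w] w1 by simp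
qed

lemma card_int_interval_le:
  fixes a b :: int
  assumes "of_int (b - a + 1) \<le> r" "0 \<le> r"
  shows "real (card {a..b}) \<le> r"
  using assms by (cases "0 \<le> b - a + 1") (auto simp: card_atLeastAtMost_int)

definition cell :: "complex \<Rightarrow> int \<times> int" where
  "cell z = (\<lfloor>8 * Re z\<rfloor>, \<lfloor>8 * Im z\<rfloor>)"

lemma cell_Re_bounds:
  "of_int (fst (cell z)) / 8 \<le> Re z" "Re z < of_int (fst (cell z)) / 8 + 1/8"
  using floor_correct[of "8 * Re z"] unfolding cell_def fst_conv by linarith+

lemma cell_eq_close:
  assumes "cell u = cell v"
  shows "norm (u - v) \<le> 1/4"
proof -
  have "\<lfloor>8 * Re u\<rfloor> = \<lfloor>8 * Re v\<rfloor>" "\<lfloor>8 * Im u\<rfloor> = \<lfloor>8 * Im v\<rfloor>"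
    using assms by (auto simp: cell_def)
  then have "\<bar>Re u - Re v\<bar> < 1/8" "\<bar>Im u - Im v\<bar> < 1/8"
    using floor_correct[of "8 * Re u"] floor_correct[of "8 * Re v"]
      floor_correct[of "8 * Im u"] floor_correct[of "8 * Im v"] by linarith+
  then show ?thesis using cmod_le[of "u - v"] by simp
qed

(* For an orbit point in the cell column m (real part at least m/8), one step of the
   iteration expands by at least exp(m/8)/8; contr m is the reciprocal factor. *)
definition contr :: "int \<Rightarrow> real" where
  "contr m = 8 * exp (- (of_int m / 8))"

lemma contr_pos: "contr m > 0"
  by (simp add: contr_def)

lemma contr_times_expansion: "contr m * (exp (of_int m / 8) / 8) = 1"
  by (simp add: contr_def exp_minus field_simps)

(* Far to the right the expansion factor exp(x)/8 is at least 2. *)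
lemma exp_ge_16: "(15::real) \<le> x \<Longrightarrow> 16 \<le> exp x"
  using exp_ge_add_one_self[of x] by linarith

lemma contr_le_half:
  assumes "of_int m / 8 \<ge> (15::real)"
  shows "contr m \<le> 1/2"
  using exp_ge_16[OF assms] by (simp add: contr_def exp_minus field_simps)

(* An itinerary is a finite list of cells.  Its scale is the product of the
   contraction factors along all but its last cell; a piece of parameter space
   with a given itinerary has diameter at most scale/8.  The s-weight is scale^s. *)
definition itin_scale :: "(int \<times> int) list \<Rightarrow> real" where
  "itin_scale \<sigma> = (\<Prod>j<length \<sigma> - 1. contr (fst (\<sigma> ! j)))"

definition weight :: "real \<Rightarrow> (int \<times> int) list \<Rightarrow> real" where
  "weight s \<sigma> = itin_scale \<sigma> powr s"

lemma itin_scale_pos: "itin_scale \<sigma> > 0"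
  by (simp add: itin_scale_def contr_pos prod_pos)

lemma weight_nonneg: "weight s \<sigma> \<ge> 0"
  by (simp add: weight_def)

lemma itin_scale_snoc:
  assumes "\<sigma> \<noteq> []"
  shows "itin_scale (\<sigma> @ [\<tau>]) = itin_scale \<sigma> * contr (fst (last \<sigma>))"
proof -
  obtain n where n: "length \<sigma> = Suc n" using assms by (cases \<sigma>) auto
  have "itin_scale (\<sigma> @ [\<tau>]) = (\<Prod>j<Suc n. contr (fst (\<sigma> ! j)))"
    by (simp add: itin_scale_def n nth_append)
  also have "\<dots> = itin_scale \<sigma> * contr (fst (\<sigma> ! n))"
    by (simp add: itin_scale_def n)
  finally show ?thesis using assms n by (simp add: last_conv_nth)
qed

lemma weight_snoc:
  "\<sigma> \<noteq> [] \<Longrightarrow> weight s (\<sigma> @ [\<tau>]) = weight s \<sigma> * contr (fst (last \<sigma>)) powr s"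
  by (simp add: weight_def itin_scale_snoc powr_mult itin_scale_pos contr_pos less_imp_le)

(* The setting of the proposition for a fixed threshold xi >= 4M + 20: E^N maps
   Lambda_t conformally onto the double square of the standard square Q with
   |(E^N)'| > 2, and Lambda = (E^N)^(-1)(Q) within Lambda_t lies in the disk D_M(0). *)
locale parameter_square =
  fixes p M \<xi> :: real and N :: nat and c :: complex and \<Lambda>t :: "complex set"
  assumes p: "p > 1" and M: "M > 0" and \<xi>: "\<xi> \<ge> 4 * M + 20"
    and open_\<Lambda>t: "open \<Lambda>t"
    and bij: "bij_betw (Eiter N) \<Lambda>t (open_square c (pi / 2))"
    and deriv_gt: "\<forall>\<kappa>\<in>\<Lambda>t. norm (deriv (Eiter N) \<kappa>) > 2"
    and \<Lambda>_bounded: "(Eiter N -` open_square c (pi / 4)) \<inter> \<Lambda>t \<subseteq> ball 0 M"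
begin

definition \<Lambda> :: "complex set" where
  "\<Lambda> = (Eiter N -` open_square c (pi / 4)) \<inter> \<Lambda>t"

definition trapped :: "complex set" where
  "trapped = {\<kappa> \<in> \<Lambda>. \<forall>j. Eiter (N + j) \<kappa> \<in> Pset p \<xi>}"

lemma \<Lambda>_expansion:
  assumes "\<kappa> \<in> \<Lambda>" "\<kappa>' \<in> \<Lambda>"
  shows "2 * norm (\<kappa> - \<kappa>') \<le> norm (Eiter N \<kappa> - Eiter N \<kappa>')"
  using assms deriv_gt
  by (intro inverse_branch_expansion[OF _ open_\<Lambda>t bij convex_open_square])
     (auto simp: \<Lambda>_def intro: holomorphic_on_subset[OF Eiter_holomorphic])

lemma trapped_norm: "\<kappa> \<in> trapped \<Longrightarrow> norm \<kappa> < M"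
  using \<Lambda>_bounded by (auto simp: trapped_def \<Lambda>_def)

lemma trapped_orbit:
  assumes "\<kappa> \<in> trapped"
  shows "Eiter (N + j) \<kappa> \<in> Pset p \<xi>" "Re (Eiter (N + j) \<kappa>) > \<xi>"
    "\<bar>Im (Eiter (N + j) \<kappa>)\<bar> < Re (Eiter (N + j) \<kappa>) powr (1 / p)"
  using assms by (auto simp: trapped_def Pset_def)

lemma orbit_growth:
  assumes \<kappa>: "\<kappa> \<in> trapped"
  shows "norm (Eiter (N + Suc j) \<kappa>) \<le> exp (Re (Eiter (N + j) \<kappa>)) + M"
    "Re (Eiter (N + j) \<kappa>) + 1 \<le> Re (Eiter (N + Suc j) \<kappa>)"
proof -
  define w where "w = Eiter (N + Suc j) \<kappa>"
  define x where "x = Re (Eiter (N + j) \<kappa>)"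
  have w: "w = exp (Eiter (N + j) \<kappa>) + \<kappa>" by (simp add: w_def Eiter_Suc)
  have norm_exp: "norm (exp (Eiter (N + j) \<kappa>)) = exp x" by (simp add: x_def)
  have \<kappa>M: "norm \<kappa> < M" using trapped_norm[OF \<kappa>] .
  show "norm w \<le> exp x + M"
    using w norm_exp \<kappa>M norm_triangle_ineq[of "exp (Eiter (N + j) \<kappa>)" \<kappa>] by simp
  have "exp x - M \<le> norm w"
    using w norm_exp \<kappa>M norm_triangle_ineq2[of "exp (Eiter (N + j) \<kappa>)" "- \<kappa>"] by simp
  moreover have "norm w \<le> 2 * Re w"
    using trapped_orbit(1)[OF \<kappa>, of "Suc j"] p \<xi> M
    by (intro norm_le_twice_Re_Pset) (auto simp: w_def)
  moreover have "2 * x + 2 + M \<le> exp x"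
    using trapped_orbit(2)[OF \<kappa>, of j] \<xi> M by (intro exp_ge_linear) (auto simp: x_def)
  ultimately show "x + 1 \<le> Re w" by linarith
qed

lemma cell_column_ge:
  assumes "\<kappa> \<in> trapped"
  shows "\<xi> - 1/8 \<le> of_int (fst (cell (Eiter (N + j) \<kappa>))) / 8"
  using cell_Re_bounds(2)[of "Eiter (N + j) \<kappa>"] trapped_orbit(2)[OF assms, of j] by linarith

lemma trapped_contr_le_half:
  assumes "\<kappa> \<in> trapped"
  shows "contr (fst (cell (Eiter (N + j) \<kappa>))) \<le> 1/2"
  using cell_column_ge[OF assms, of j] \<xi> M by (intro contr_le_half) linarith

definition itin :: "nat \<Rightarrow> complex \<Rightarrow> (int \<times> int) list" where
  "itin K \<kappa> = map (\<lambda>j. cell (Eiter (N + j) \<kappa>)) [0..<Suc K]"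

lemma itin_0: "itin 0 \<kappa> = [cell (Eiter N \<kappa>)]"
  by (simp add: itin_def)

lemma itin_Suc: "itin (Suc K) \<kappa> = itin K \<kappa> @ [cell (Eiter (N + Suc K) \<kappa>)]"
  by (simp add: itin_def)

lemma itin_last: "last (itin K \<kappa>) = cell (Eiter (N + K) \<kappa>)"
  by (simp add: itin_def)

lemma itin_nonempty: "itin K \<kappa> \<noteq> []"
  by (simp add: itin_def)

lemma itin_scale_Suc:
  "itin_scale (itin (Suc K) \<kappa>) = itin_scale (itin K \<kappa>) * contr (fst (cell (Eiter (N + K) \<kappa>)))"
  by (simp add: itin_Suc itin_scale_snoc itin_nonempty itin_last)

lemma itin_scale_le:
  assumes "\<kappa> \<in> trapped"
  shows "itin_scale (itin K \<kappa>) \<le> (1/2) ^ K"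
proof (induction K)
  case 0
  then show ?case by (simp add: itin_0 itin_scale_def)
next
  case (Suc K)
  have "itin_scale (itin (Suc K) \<kappa>) \<le> (1/2) ^ K * (1/2)"
    unfolding itin_scale_Suc using Suc trapped_contr_le_half[OF assms, of K]
    by (intro mult_mono) (auto simp: itin_scale_pos contr_pos less_imp_le)
  then show ?case by simp
qed

lemma itinerary_expansion:
  assumes \<kappa>: "\<kappa> \<in> trapped" "\<kappa>' \<in> trapped" and same: "itin K \<kappa> = itin K \<kappa>'"
  shows "2 * norm (\<kappa> - \<kappa>') \<le> itin_scale (itin K \<kappa>) * norm (Eiter (N + K) \<kappa> - Eiter (N + K) \<kappa>')"
  using same
proof (induction K)
  case 0
  then show ?case using \<Lambda>_expansion \<kappa> by (simp add: itin_0 itin_scale_def trapped_def)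
next
  case (Suc K)
  define u where "u = Eiter (N + K) \<kappa>"
  define v where "v = Eiter (N + K) \<kappa>'"
  define m where "m = fst (cell u)"
  define S where "S = itin_scale (itin K \<kappa>)"
  have same_K: "itin K \<kappa> = itin K \<kappa>'" and same_cell: "cell u = cell v"
    using Suc.prems itin_last[of K \<kappa>] itin_last[of K \<kappa>'] by (auto simp: itin_Suc u_def v_def)
  have IH: "2 * norm (\<kappa> - \<kappa>') \<le> S * norm (u - v)"
    using Suc.IH[OF same_K] by (simp add: S_def u_def v_def)
  have "(1/2::real) ^ K \<le> 1" by (simp add: power_le_one)
  then have "S \<le> 1"
    using itin_scale_le[OF \<kappa>(1), of K] by (simp add: S_def)
  then have "S * norm (u - v) \<le> norm (u - v)"
    by (simp add: mult_left_le_one_le itin_scale_pos S_def less_imp_le)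
  then have params: "norm (\<kappa> - \<kappa>') \<le> norm (u - v) / 2" using IH by linarith
  have "of_int m / 8 \<le> Re v"
    using cell_Re_bounds(1)[of v] same_cell by (simp add: m_def)
  moreover have "16 \<le> exp (of_int m / 8 :: real)"
    using cell_column_ge[OF \<kappa>(1), of K] \<xi> M unfolding m_def u_def
    by (intro exp_ge_16) linarith
  ultimately have step: "exp (of_int m / 8) * norm (u - v) / 8 \<le> norm (Eiter (N + Suc K) \<kappa> - Eiter (N + Suc K) \<kappa>')"
    using exp_step_expansion[OF cell_eq_close[OF same_cell] _ _ params]
    by (simp add: Eiter_Suc u_def v_def)
  have cancel: "contr m * (exp (of_int m / 8) * norm (u - v) / 8)
      = (contr m * (exp (of_int m / 8) / 8)) * norm (u - v)"
    by (simp add: algebra_simps)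
  have "2 * norm (\<kappa> - \<kappa>') \<le> S * (contr m * (exp (of_int m / 8) * norm (u - v) / 8))"
    unfolding cancel contr_times_expansion mult_1_left using IH .
  also have "\<dots> \<le> S * (contr m * norm (Eiter (N + Suc K) \<kappa> - Eiter (N + Suc K) \<kappa>'))"
    using step by (intro mult_left_mono) (auto simp: S_def itin_scale_pos contr_pos less_imp_le)
  finally show ?case by (simp add: itin_scale_Suc S_def m_def u_def mult.assoc)
qed

lemma itinerary_close:
  assumes "\<kappa> \<in> trapped" "\<kappa>' \<in> trapped" "itin K \<kappa> = itin K \<kappa>'"
  shows "norm (\<kappa> - \<kappa>') \<le> itin_scale (itin K \<kappa>) / 8"
proof -
  have "cell (Eiter (N + K) \<kappa>) = cell (Eiter (N + K) \<kappa>')"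
    using assms(3) itin_last[of K] by metis
  then have "norm (Eiter (N + K) \<kappa> - Eiter (N + K) \<kappa>') \<le> 1/4"
    by (rule cell_eq_close)
  then have "itin_scale (itin K \<kappa>) * norm (Eiter (N + K) \<kappa> - Eiter (N + K) \<kappa>') \<le> itin_scale (itin K \<kappa>) * (1/4)"
    by (intro mult_left_mono) (auto simp: itin_scale_pos less_imp_le)
  then show ?thesis using itinerary_expansion[OF assms] by simp
qed

(* The admissible itineraries: they start in a cell near the square Q right of xi, and
   each next cell is one reachable by the growth estimates. *)
definition start_cells :: "(int \<times> int) set" where
  "start_cells = {\<lfloor>8 * \<xi>\<rfloor> .. \<lfloor>8 * Re c + 8\<rfloor>} \<times> {\<lfloor>8 * Im c - 8\<rfloor> .. \<lfloor>8 * Im c + 8\<rfloor>}"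

definition reach :: "int \<Rightarrow> real" where
  "reach m = exp ((of_int m + 1) / 8) + M"

definition next_cells :: "int \<times> int \<Rightarrow> (int \<times> int) set" where
  "next_cells \<tau> = {fst \<tau> + 8 .. \<lfloor>8 * reach (fst \<tau>)\<rfloor>}
     \<times> {\<lfloor>- 8 * reach (fst \<tau>) powr (1 / p)\<rfloor> .. \<lfloor>8 * reach (fst \<tau>) powr (1 / p)\<rfloor>}"

fun admissible :: "nat \<Rightarrow> (int \<times> int) list set" where
  "admissible 0 = (\<lambda>\<tau>. [\<tau>]) ` start_cells"
| "admissible (Suc K) = (\<lambda>(\<sigma>, \<tau>). \<sigma> @ [\<tau>]) ` (SIGMA \<sigma>:admissible K. next_cells (last \<sigma>))"

(* A trapped itinerary starts in a start cell, since E^N(kappa) lies in Q right of xi. *)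
lemma itin_start:
  assumes \<kappa>: "\<kappa> \<in> trapped"
  shows "cell (Eiter N \<kappa>) \<in> start_cells"
proof -
  have "Eiter N \<kappa> \<in> open_square c (pi / 4)"
    using \<kappa> by (auto simp: trapped_def \<Lambda>_def)
  then have "\<bar>Re (Eiter N \<kappa>) - Re c\<bar> < 1" "\<bar>Im (Eiter N \<kappa>) - Im c\<bar> < 1"
    using pi_less_4 by (auto simp: open_square_def)
  moreover have "\<xi> < Re (Eiter N \<kappa>)"
    using trapped_orbit(2)[OF \<kappa>, of 0] by simp
  ultimately have "\<lfloor>8 * \<xi>\<rfloor> \<le> \<lfloor>8 * Re (Eiter N \<kappa>)\<rfloor>"
    "\<lfloor>8 * Re (Eiter N \<kappa>)\<rfloor> \<le> \<lfloor>8 * Re c + 8\<rfloor>"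
    "\<lfloor>8 * Im c - 8\<rfloor> \<le> \<lfloor>8 * Im (Eiter N \<kappa>)\<rfloor>"
    "\<lfloor>8 * Im (Eiter N \<kappa>)\<rfloor> \<le> \<lfloor>8 * Im c + 8\<rfloor>"
    by (intro floor_mono; simp)+
  then show ?thesis
    unfolding start_cells_def cell_def by (simp only: mem_Times_iff fst_conv snd_conv atLeastAtMost_iff)
qed

lemma itin_next:
  assumes \<kappa>: "\<kappa> \<in> trapped"
  shows "cell (Eiter (N + Suc K) \<kappa>) \<in> next_cells (cell (Eiter (N + K) \<kappa>))"
proof -
  define u where "u = Eiter (N + K) \<kappa>"
  define w where "w = Eiter (N + Suc K) \<kappa>"
  define m where "m = fst (cell u)"
  have grow: "Re u + 1 \<le> Re w" "norm w \<le> exp (Re u) + M"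
    using orbit_growth[OF \<kappa>, of K] by (auto simp: u_def w_def)
  have "Re u < (of_int m + 1) / 8"
    using cell_Re_bounds(2)[of u] by (simp add: m_def field_simps)
  then have "exp (Re u) \<le> exp ((of_int m + 1) / 8)"
    by simp
  then have "Re w \<le> reach m"
    using complex_Re_le_cmod[of w] grow(2) unfolding reach_def by linarith
  moreover have "0 < Re w"
    using trapped_orbit(2)[OF \<kappa>, of "Suc K"] \<xi> M by (simp add: w_def)
  ultimately have "\<bar>Im w\<bar> < reach m powr (1 / p)"
    using trapped_orbit(3)[OF \<kappa>, of "Suc K"] p powr_mono2[of "1 / p" "Re w" "reach m"]
    by (simp add: w_def)
  moreover have "m + 8 \<le> \<lfloor>8 * Re w\<rfloor>"
    using grow(1) floor_mono[of "8 * Re u + 8" "8 * Re w"] by (simp add: m_def cell_def)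
  moreover note \<open>Re w \<le> reach m\<close>
  ultimately show ?thesis
    unfolding next_cells_def by (auto simp: cell_def m_def u_def w_def intro!: floor_mono)
qed

lemma itin_admissible: "\<kappa> \<in> trapped \<Longrightarrow> itin K \<kappa> \<in> admissible K"
proof (induction K)
  case 0
  then show ?case using itin_start by (simp add: itin_0)
next
  case (Suc K)
  then have "(itin K \<kappa>, cell (Eiter (N + Suc K) \<kappa>)) \<in> (SIGMA \<sigma>:admissible K. next_cells (last \<sigma>))"
    using itin_next by (simp add: itin_last)
  then show ?case by (simp add: itin_Suc image_iff)
qed

lemma admissible_last:
  "\<sigma> \<in> admissible K \<Longrightarrow> \<sigma> \<noteq> [] \<and> \<lfloor>8 * \<xi>\<rfloor> + 8 * int K \<le> fst (last \<sigma>)"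
proof (induction K arbitrary: \<sigma>)
  case 0
  then show ?case by (auto simp: start_cells_def)
next
  case (Suc K)
  then obtain \<sigma>' \<tau> where "\<sigma> = \<sigma>' @ [\<tau>]" "\<sigma>' \<in> admissible K" "\<tau> \<in> next_cells (last \<sigma>')"
    by auto
  then show ?case using Suc.IH[of \<sigma>'] by (auto simp: next_cells_def)
qed

lemma finite_admissible: "finite (admissible K)"
  by (induction K) (auto simp: start_cells_def next_cells_def)

(* The number of possible successors of a cell in column m is O(R^(1+1/p)) with
   R = reach m, because the next point lies in P_{p,xi} and has modulus at most R. *)
lemma card_next_cells_reach:
  assumes m: "0 \<le> fst \<tau>"
  shows "real (card (next_cells \<tau>)) \<le> 144 * reach (fst \<tau>) powr (1 + 1 / p)"
proof -
  define R where "R = reach (fst \<tau>)"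
  define S where "S = R powr (1 / p)"
  have "1 \<le> exp ((of_int (fst \<tau>) + 1) / 8 :: real)"
    using m by simp
  then have R1: "1 \<le> R" using M unfolding R_def reach_def by linarith
  then have S1: "1 \<le> S" unfolding S_def using p by (intro ge_one_powr_ge_zero) auto
  have "real (card {fst \<tau> + 8 .. \<lfloor>8 * R\<rfloor>}) \<le> 8 * R"
    using floor_correct[of "8 * R"] m R1 by (intro card_int_interval_le) linarith+
  moreover have "real (card {\<lfloor>- 8 * S\<rfloor> .. \<lfloor>8 * S\<rfloor>}) \<le> 18 * S"
    using floor_correct[of "8 * S"] floor_correct[of "- 8 * S"] S1
    by (intro card_int_interval_le) linarith+
  moreover have "card (next_cells \<tau>) = card {fst \<tau> + 8 .. \<lfloor>8 * R\<rfloor>} * card {\<lfloor>- 8 * S\<rfloor> .. \<lfloor>8 * S\<rfloor>}"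
    by (simp add: next_cells_def R_def S_def card_cartesian_product)
  ultimately have "real (card (next_cells \<tau>)) \<le> (8 * R) * (18 * S)"
    by (simp only: of_nat_mult) (intro mult_mono; simp)
  also have "\<dots> = 144 * R powr (1 + 1 / p)"
    using R1 by (simp add: S_def powr_add)
  finally show ?thesis by (simp add: R_def)
qed

lemma card_next_cells:
  assumes m: "\<lfloor>8 * \<xi>\<rfloor> \<le> fst \<tau>"
  shows "real (card (next_cells \<tau>)) \<le> 1152 * exp ((1 + 1 / p) * (of_int (fst \<tau>) / 8))"
proof -
  define x :: real where "x = of_int (fst \<tau>) / 8"
  have "8 * \<xi> - 1 < of_int (fst \<tau>)"
    using m floor_correct[of "8 * \<xi>"] by linarith
  then have x: "\<xi> - 1/8 \<le> x" by (simp add: x_def)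
  have "1 + (x + 1/8) \<le> exp (x + 1/8)" by (rule exp_ge_add_one_self)
  then have R: "1 \<le> reach (fst \<tau>)" "reach (fst \<tau>) \<le> 2 * exp (x + 1/8)"
    using x \<xi> M by (auto simp: reach_def x_def add_divide_distrib)
  have "0 \<le> fst \<tau>"
    using x \<xi> M by (simp add: x_def)
  then have "real (card (next_cells \<tau>)) \<le> 144 * reach (fst \<tau>) powr (1 + 1 / p)"
    by (rule card_next_cells_reach)
  also have "reach (fst \<tau>) powr (1 + 1 / p) \<le> (2 * exp (x + 1/8)) powr (1 + 1 / p)"
    using R p by (intro powr_mono2) auto
  also have "\<dots> = 2 powr (1 + 1 / p) * exp ((1 + 1 / p) * x) * exp ((1 + 1 / p) / 8)"
    by (simp add: powr_mult exp_powr_real algebra_simps flip: exp_add)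
  also have "\<dots> \<le> 4 * exp ((1 + 1 / p) * x) * 2"
  proof (intro mult_mono)
    have "2 powr (1 + 1 / p) \<le> 2 powr (2::real)" using p by (intro powr_mono) auto
    then show "2 powr (1 + 1 / p) \<le> 4" by simp
    have "1 / p \<le> 1" using p by simp
    then have "exp ((1 + 1 / p) / 8) \<le> exp (1 / 2)" by simp
    then show "exp ((1 + 1 / p) / 8) \<le> (2::real)" using exp_half_le2 by linarith
  qed auto
  finally show ?thesis by (simp add: x_def)
qed

(* Weighting each successor by contr^s gives a factor that decays geometrically in
   the level K as soon as s > 1 + 1/p; this is where the exponent 1 + 1/p comes from. *)
definition level_factor :: "real \<Rightarrow> nat \<Rightarrow> real" where
  "level_factor s K = 1152 * 8 powr s * exp (- (s - 1 - 1 / p) * (\<xi> - 1/8 + real K))"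

lemma level_bound:
  assumes s: "1 + 1 / p < s" and m: "\<lfloor>8 * \<xi>\<rfloor> + 8 * int K \<le> fst \<tau>"
  shows "contr (fst \<tau>) powr s * real (card (next_cells \<tau>)) \<le> level_factor s K"
proof -
  define x :: real where "x = of_int (fst \<tau>) / 8"
  have "8 * \<xi> - 1 + 8 * real K \<le> of_int (fst \<tau>)"
    using m floor_correct[of "8 * \<xi>"] by linarith
  then have x: "\<xi> - 1/8 + real K \<le> x" by (simp add: x_def field_simps)
  have "contr (fst \<tau>) powr s = 8 powr s * exp (- x * s)"
    by (simp add: contr_def x_def powr_mult exp_powr_real)
  moreover have "real (card (next_cells \<tau>)) \<le> 1152 * exp ((1 + 1 / p) * x)"
    using card_next_cells m by (simp add: x_def)
  ultimately have "contr (fst \<tau>) powr s * real (card (next_cells \<tau>))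
      \<le> 8 powr s * exp (- x * s) * (1152 * exp ((1 + 1 / p) * x))"
    by (simp add: mult_left_mono)
  also have "\<dots> = 1152 * 8 powr s * exp (- (s - 1 - 1 / p) * x)"
    by (simp add: algebra_simps flip: exp_add)
  also have "\<dots> \<le> level_factor s K"
    unfolding level_factor_def using s x by (intro mult_left_mono) (auto simp: mult_left_mono)
  finally show ?thesis .
qed

lemma level_factor_tendsto_zero:
  assumes s: "1 + 1 / p < s"
  shows "level_factor s \<longlonglongrightarrow> 0"
proof -
  define \<epsilon> where "\<epsilon> = s - 1 - 1 / p"
  define G where "G = 1152 * 8 powr s * exp (- \<epsilon> * (\<xi> - 1/8))"
  have "level_factor s = (\<lambda>K. G * exp (- \<epsilon>) ^ K)"
  proof
    fix K
    have "exp (- \<epsilon> * (\<xi> - 1/8 + real K)) = exp (- \<epsilon> * (\<xi> - 1/8)) * exp (real K * (- \<epsilon>))"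
      by (simp add: algebra_simps flip: exp_add)
    then show "level_factor s K = G * exp (- \<epsilon>) ^ K"
      by (simp add: level_factor_def G_def \<epsilon>_def exp_of_nat_mult)
  qed
  moreover have "(\<lambda>K. G * exp (- \<epsilon>) ^ K) \<longlonglongrightarrow> G * 0"
    using s by (intro tendsto_mult tendsto_const LIMSEQ_power_zero) (auto simp: \<epsilon>_def)
  ultimately show ?thesis by simp
qed

definition total_weight :: "real \<Rightarrow> nat \<Rightarrow> real" where
  "total_weight s K = (\<Sum>\<sigma>\<in>admissible K. weight s \<sigma>)"

lemma total_weight_Suc:
  assumes s: "1 + 1 / p < s"
  shows "total_weight s (Suc K) \<le> level_factor s K * total_weight s K"
proof -
  have inj: "inj_on (\<lambda>(\<sigma>, \<tau>). \<sigma> @ [\<tau>]) (SIGMA \<sigma>:admissible K. next_cells (last \<sigma>))"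
    by (auto simp: inj_on_def)
  have fin: "finite (next_cells \<tau>)" for \<tau>
    by (simp add: next_cells_def)
  have "total_weight s (Suc K) = (\<Sum>(\<sigma>, \<tau>)\<in>(SIGMA \<sigma>:admissible K. next_cells (last \<sigma>)). weight s (\<sigma> @ [\<tau>]))"
    unfolding total_weight_def admissible.simps
    by (subst sum.reindex[OF inj]) (simp add: case_prod_unfold)
  also have "\<dots> = (\<Sum>\<sigma>\<in>admissible K. \<Sum>\<tau>\<in>next_cells (last \<sigma>). weight s (\<sigma> @ [\<tau>]))"
    by (rule sum.Sigma[symmetric]) (auto simp: finite_admissible fin)
  also have "\<dots> = (\<Sum>\<sigma>\<in>admissible K. weight s \<sigma> * (contr (fst (last \<sigma>)) powr s * real (card (next_cells (last \<sigma>)))))"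
    using admissible_last by (intro sum.cong refl) (simp add: weight_snoc)
  also have "\<dots> \<le> (\<Sum>\<sigma>\<in>admissible K. weight s \<sigma> * level_factor s K)"
    using admissible_last level_bound[OF s]
    by (intro sum_mono mult_left_mono weight_nonneg) blast
  also have "\<dots> = level_factor s K * total_weight s K"
    by (simp add: total_weight_def sum_distrib_left mult.commute)
  finally show ?thesis .
qed

lemma total_weight_tendsto_zero:
  assumes s: "1 + 1 / p < s"
  shows "total_weight s \<longlonglongrightarrow> 0"
proof (rule tendsto_zero_if_ratio_tendsto_zero[OF _ total_weight_Suc[OF s] level_factor_tendsto_zero[OF s]])
  show "0 \<le> total_weight s K" for K
    unfolding total_weight_def by (intro sum_nonneg weight_nonneg)
qed

definition piece :: "complex set \<Rightarrow> nat \<Rightarrow> (int \<times> int) list \<Rightarrow> complex set" where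
  "piece A K \<sigma> = {\<kappa> \<in> A. itin K \<kappa> = \<sigma>}"

lemma piece_bounded: "A \<subseteq> trapped \<Longrightarrow> bounded (piece A K \<sigma>)"
  using trapped_norm by (intro bounded_subset[OF bounded_ball[of 0 M]]) (auto simp: piece_def)

lemma piece_diameter:
  assumes A: "A \<subseteq> trapped"
  shows "diameter (piece A K \<sigma>) \<le> itin_scale \<sigma> / 8"
proof (rule diameter_le)
  show "piece A K \<sigma> \<noteq> {} \<or> 0 \<le> itin_scale \<sigma> / 8"
    using itin_scale_pos[of \<sigma>] by simp
  show "norm (\<kappa> - \<kappa>') \<le> itin_scale \<sigma> / 8" if "\<kappa> \<in> piece A K \<sigma>" "\<kappa>' \<in> piece A K \<sigma>" for \<kappa> \<kappa>'
    using that A itinerary_close[of \<kappa> \<kappa>' K] by (auto simp: piece_def)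
qed

lemma piece_diameter_small:
  assumes A: "A \<subseteq> trapped"
  shows "diameter (piece A K \<sigma>) \<le> (1/2) ^ K / 8"
proof (cases "piece A K \<sigma> = {}")
  case False
  then obtain \<kappa> where "\<kappa> \<in> trapped" "itin K \<kappa> = \<sigma>"
    using A by (auto simp: piece_def)
  then show ?thesis
    using piece_diameter[OF A, of K \<sigma>] itin_scale_le[of \<kappa> K] by simp
qed simp

lemma piece_diam_pow:
  assumes A: "A \<subseteq> trapped" and s: "0 < s"
  shows "diam_pow s (piece A K \<sigma>) \<le> ennreal (weight s \<sigma>)"
proof (cases "piece A K \<sigma> = {}")
  case False
  have "diameter (piece A K \<sigma>) powr s \<le> (itin_scale \<sigma> / 8) powr s"
    using piece_diameter[OF A] diameter_ge_0[OF piece_bounded[OF A]] s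
    by (intro powr_mono2) auto
  also have "\<dots> \<le> itin_scale \<sigma> powr s"
    using itin_scale_pos[of \<sigma>] s by (intro powr_mono2) auto
  finally show ?thesis using False s by (simp add: diam_pow_def weight_def ennreal_leI)
qed (simp add: diam_pow_def)

(* Covering A by the pieces of a deep level gives covers of arbitrarily small
   mesh and total s-weight, hence zero content. *)
lemma hausdorff_content_trapped:
  assumes A: "A \<subseteq> trapped" and s: "1 + 1 / p < s" and \<delta>: "0 < \<delta>"
  shows "hausdorff_content s \<delta> A = 0"
proof -
  have "0 < 1 / p" using p by simp
  then have s0: "0 < s" using s by linarith
  have "hausdorff_content s \<delta> A \<le> 0 + ennreal e" if e: "0 < e" for e
  proof -
    have "(\<lambda>K. (1/2::real) ^ K / 8) \<longlonglongrightarrow> 0"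
      by (intro tendsto_divide_zero LIMSEQ_power_zero) auto
    then have "\<forall>\<^sub>F K in sequentially. total_weight s K < e \<and> (1/2::real) ^ K / 8 < \<delta>"
      by (intro eventually_conj order_tendstoD(2)[OF total_weight_tendsto_zero[OF s] e]
          order_tendstoD(2)[OF _ \<delta>])
    then obtain K where K: "total_weight s K < e" "(1/2::real) ^ K / 8 < \<delta>"
      using eventually_sequentially by auto
    have cover: "A \<subseteq> (\<Union>\<sigma>\<in>admissible K. piece A K \<sigma>)"
      using A itin_admissible by (auto simp: piece_def)
    have small: "diameter (piece A K \<sigma>) \<le> \<delta>" for \<sigma>
      using piece_diameter_small[OF A, of K \<sigma>] K(2) by linarith
    have "hausdorff_content s \<delta> A \<le> (\<Sum>\<sigma>\<in>admissible K. diam_pow s (piece A K \<sigma>))"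
      using piece_bounded[OF A] small \<delta>
      by (intro hausdorff_content_finite_cover[OF finite_admissible cover]) auto
    also have "\<dots> \<le> (\<Sum>\<sigma>\<in>admissible K. ennreal (weight s \<sigma>))"
      by (intro sum_mono piece_diam_pow[OF A s0])
    also have "\<dots> = ennreal (total_weight s K)"
      by (simp add: total_weight_def weight_nonneg)
    also have "\<dots> \<le> 0 + ennreal e"
      using K(1) by (simp add: ennreal_leI)
    finally show ?thesis .
  qed
  then have "hausdorff_content s \<delta> A \<le> 0"
    by (rule ennreal_le_epsilon) auto
  then show ?thesis by simp
qed

lemma hausdorff_dim_trapped:
  assumes "A \<subseteq> trapped"
  shows "hausdorff_dim A \<le> 1 + 1 / p"
proof (rule hausdorff_dim_le)
  show "0 \<le> 1 + 1 / p" using p by simp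
  show "hausdorff_measure s A = 0" if "1 + 1 / p < s" for s
    using hausdorff_content_trapped[OF assms that] by (intro hausdorff_measure_zeroI)
qed

lemma I_pN_trapped: "I_pN p N \<xi> \<Lambda> \<subseteq> trapped"
  by (auto simp: I_pN_def I_p_def trapped_def)

end

theorem proposition3p1:
  fixes p M :: real
  assumes "p > 1" and "M > 0"
  shows "\<exists>\<xi>s > 0. \<forall>(N::nat) (c::complex) (\<Lambda>t::complex set).
           (open \<Lambda>t \<and>
            bij_betw (Eiter N) \<Lambda>t (open_square c (pi / 2)) \<and>
            (\<forall>\<kappa>\<in>\<Lambda>t. norm (deriv (Eiter N) \<kappa>) > 2) \<and>
            (Eiter N -` open_square c (pi / 4)) \<inter> \<Lambda>t \<subseteq> ball 0 M)
           \<longrightarrow> (\<forall>\<xi>\<ge>\<xi>s. hausdorff_dim (I_pN p N \<xi> ((Eiter N -` open_square c (pi / 4)) \<inter> \<Lambda>t))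
                            \<le> 1 + 1 / p)"
proof (intro exI[of _ "4 * M + 20"] conjI allI impI)
  show "0 < 4 * M + 20" using assms(2) by simp
  fix N c \<Lambda>t \<xi>
  assume square: "open \<Lambda>t \<and> bij_betw (Eiter N) \<Lambda>t (open_square c (pi / 2)) \<and>
      (\<forall>\<kappa>\<in>\<Lambda>t. norm (deriv (Eiter N) \<kappa>) > 2) \<and>
      (Eiter N -` open_square c (pi / 4)) \<inter> \<Lambda>t \<subseteq> ball 0 M"
    and \<xi>: "4 * M + 20 \<le> \<xi>"
  interpret parameter_square p M \<xi> N c \<Lambda>t
    using assms square \<xi> by unfold_locales auto
  show "hausdorff_dim (I_pN p N \<xi> ((Eiter N -` open_square c (pi / 4)) \<inter> \<Lambda>t)) \<le> 1 + 1 / p"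
    using hausdorff_dim_trapped[OF I_pN_trapped] by (simp add: \<Lambda>_def)
qed

end
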